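(* Every shifted hyperbolic operator $T\in L_{aut}(\mathcal B)$ has the shadowing property but does not have the unique shadowing property.
   Context: $\mathcal B$ is a Banach space. $T$ is generalized hyperbolic if there is a decomposition $\mathcal B=E^-\oplus E^+$ into complementary closed subspaces with $T(E^+)\subset E^+$, $T^{-1}(E^-)\subset E^-$, and $T|_{E^+}$, $T^{-1}|_{E^-}$ uniform contractions; $T$ is shifted hyperbolic if in addition $E^-\cap T^{-1}(E^+)\ne\{0\}$. A $\delta$-pseudo-orbit is a sequence $(x_n)_{n\in\mathbb Z}$ with $|x_{n+1}-Tx_n|<\delta$; $y$ $\varepsilon$-shadows it if $|x_n-T^ny|<\varepsilon$ for all $n$. Shadowing property: for every $\varepsilon>0$ there is $\delta>0$ such that every $\delta$-pseudo-orbit is $\varepsilon$-shadowed. Unique shadowing property: there exist $\varepsilon_0,\delta_0>0$ such that for every $0<\varepsilon\le\varepsilon_0$ there is $0<\delta\le\delta_0$ such that every $\delta$-pseudo-orbit is $\varepsilon$-shadowed by exactly one point. *)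

theory Defs
  imports "HOL-Analysis.Analysis"
begin

definition L_aut :: "('a::banach \<Rightarrow> 'a) \<Rightarrow> bool" where
  "L_aut T \<longleftrightarrow> bounded_linear T \<and> bij T \<and> bounded_linear (inv T)"

definition Tpow :: "('a \<Rightarrow> 'a) \<Rightarrow> int \<Rightarrow> 'a \<Rightarrow> 'a" where
  "Tpow T n = (if 0 \<le> n then T ^^ nat n else inv T ^^ nat (- n))"

definition uniform_contraction_on :: "'a set \<Rightarrow> ('a::real_normed_vector \<Rightarrow> 'a) \<Rightarrow> bool" where
  "uniform_contraction_on E S \<longleftrightarrow> (\<exists>t<1. \<forall>x\<in>E. norm (S x) \<le> t * norm x)"

definition complementary_closed_subspaces :: "'a::real_normed_vector set \<Rightarrow> 'a set \<Rightarrow> bool" where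
  "complementary_closed_subspaces Em Ep \<longleftrightarrow>
     subspace Em \<and> subspace Ep \<and> closed Em \<and> closed Ep \<and>
     Em \<inter> Ep = {0} \<and> (\<forall>x. \<exists>u\<in>Em. \<exists>v\<in>Ep. x = u + v)"

definition generalized_hyperbolic_split :: "('a::banach \<Rightarrow> 'a) \<Rightarrow> 'a set \<Rightarrow> 'a set \<Rightarrow> bool" where
  "generalized_hyperbolic_split T Em Ep \<longleftrightarrow>
     complementary_closed_subspaces Em Ep \<and> T ` Ep \<subseteq> Ep \<and> inv T ` Em \<subseteq> Em \<and>
     uniform_contraction_on Ep T \<and> uniform_contraction_on Em (inv T)"

definition generalized_hyperbolic :: "('a::banach \<Rightarrow> 'a) \<Rightarrow> bool" where
  "generalized_hyperbolic T \<longleftrightarrow> (\<exists>Em Ep. generalized_hyperbolic_split T Em Ep)"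

definition shifted_hyperbolic :: "('a::banach \<Rightarrow> 'a) \<Rightarrow> bool" where
  "shifted_hyperbolic T \<longleftrightarrow> (\<exists>Em Ep. generalized_hyperbolic_split T Em Ep \<and>
       Em \<inter> (inv T) ` Ep \<noteq> {0})"

definition pseudo_orbit :: "('a::real_normed_vector \<Rightarrow> 'a) \<Rightarrow> real \<Rightarrow> (int \<Rightarrow> 'a) \<Rightarrow> bool" where
  "pseudo_orbit T \<delta> x \<longleftrightarrow> (\<forall>n. norm (x (n + 1) - T (x n)) < \<delta>)"

definition shadows :: "('a::real_normed_vector \<Rightarrow> 'a) \<Rightarrow> real \<Rightarrow> 'a \<Rightarrow> (int \<Rightarrow> 'a) \<Rightarrow> bool" where
  "shadows T \<epsilon> y x \<longleftrightarrow> (\<forall>n. norm (x n - Tpow T n y) < \<epsilon>)"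

definition shadowing_property :: "('a::real_normed_vector \<Rightarrow> 'a) \<Rightarrow> bool" where
  "shadowing_property T \<longleftrightarrow> (\<forall>\<epsilon>>0. \<exists>\<delta>>0. \<forall>x. pseudo_orbit T \<delta> x \<longrightarrow> (\<exists>y. shadows T \<epsilon> y x))"

definition unique_shadowing_property :: "('a::real_normed_vector \<Rightarrow> 'a) \<Rightarrow> bool" where
  "unique_shadowing_property T \<longleftrightarrow> (\<exists>\<epsilon>0>0. \<exists>\<delta>0>0. \<forall>\<epsilon>. 0 < \<epsilon> \<and> \<epsilon> \<le> \<epsilon>0 \<longrightarrow>
     (\<exists>\<delta>. 0 < \<delta> \<and> \<delta> \<le> \<delta>0 \<and> (\<forall>x. pseudo_orbit T \<delta> x \<longrightarrow> (\<exists>!y. shadows T \<epsilon> y x))))"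

end

theory Submission
  imports Defs
begin

text \<open>
  Shadowing: write a pseudo-orbit as x (n + 1) = T (x n) + e n with small errors e n. Splitting
  each error along the complementary subspaces (the projections are bounded by a Baire category
  argument) and summing the Ep-components forward in time under the contraction T, and the
  Em-components backward in time under the contraction T\<inverse>, yields a bounded solution w of
  w (n + 1) = T (w n) + e n. Then x - w is a genuine orbit that stays uniformly close to x.

  Non-uniqueness: a nonzero z \<in> Em with T z \<in> Ep has an orbit that stays bounded in both time
  directions, so every small multiple of z shadows the zero orbit as well as 0 does.
\<close>

lemma summable_geometric_bound:
  fixes f :: "nat \<Rightarrow> 'a::banach"
  assumes bound: "\<And>k. norm (f k) \<le> c * q ^ k" and "0 \<le> q" "q < 1"
  shows "summable f" and "norm (suminf f) \<le> c / (1 - q)"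
proof -
  have geom: "summable (\<lambda>k. c * q ^ k)"
    using assms by (intro summable_mult summable_geometric) simp
  show "summable f"
    using summable_comparison_test'[OF geom] bound by blast
  have "(\<Sum>k. c * q ^ k) = c / (1 - q)"
    using assms by (subst suminf_mult) (simp_all add: suminf_geometric)
  then show "norm (suminf f) \<le> c / (1 - q)"
    using norm_suminf_le[OF bound geom] by simp
qed

lemma funpow_contracts:
  fixes f :: "'a::real_normed_vector \<Rightarrow> 'a"
  assumes "f ` E \<subseteq> E" and "\<And>x. x \<in> E \<Longrightarrow> norm (f x) \<le> t * norm x" and "0 \<le> t" and "x \<in> E"
  shows "(f ^^ k) x \<in> E \<and> norm ((f ^^ k) x) \<le> t ^ k * norm x"
proof (induction k)
  case (Suc k)
  then have "norm ((f ^^ Suc k) x) \<le> t * norm ((f ^^ k) x)"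
    using assms(2) by simp
  also have "\<dots> \<le> t * (t ^ k * norm x)"
    using Suc assms(3) by (simp add: mult_left_mono)
  finally show ?case
    using Suc assms(1) by auto
qed (use assms in simp)

lemma uniform_contraction_onE:
  assumes "uniform_contraction_on E S"
  obtains t where "0 \<le> t" "t < 1" "\<And>x. x \<in> E \<Longrightarrow> norm (S x) \<le> t * norm x"
proof -
  obtain t where "t < 1" and t: "\<And>x. x \<in> E \<Longrightarrow> norm (S x) \<le> t * norm x"
    using assms unfolding uniform_contraction_on_def by blast
  moreover have "norm (S x) \<le> max t 0 * norm x" if "x \<in> E" for x
    using t[OF that] by (smt (verit) mult_right_mono norm_ge_zero)
  ultimately show ?thesis
    using that[of "max t 0"] by simp
qed

lemma Tpow_nat: "Tpow T (int k) = T ^^ k"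
  by (simp add: Tpow_def)

lemma Tpow_minus_nat: "Tpow T (- int k) = inv T ^^ k"
  by (cases "k = 0") (simp_all add: Tpow_def)

lemma Tpow_add_1:
  assumes "bij T"
  shows "Tpow T (n + 1) y = T (Tpow T n y)"
proof (cases n rule: int_cases)
  case (neg k)
  have "T ((inv T ^^ Suc k) y) = (inv T ^^ k) y"
    using assms by (simp add: bij_is_surj surj_f_inv_f)
  with neg show ?thesis
    by (simp add: Tpow_def nat_add_distrib del: funpow.simps)
qed (simp add: Tpow_def nat_add_distrib)

lemma recurrence_eq_Tpow:
  assumes "bij T" and step: "\<And>n. d (n + 1) = T (d n)"
  shows "d n = Tpow T n (d 0)"
proof (induction n rule: int_induct[where k = 0])
  case base
  show ?case by (simp add: Tpow_def)
next
  case (step1 i)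
  then show ?case using step Tpow_add_1[OF assms(1)] by simp
next
  case (step2 i)
  have "T (d (i - 1)) = T (Tpow T (i - 1) (d 0))"
    using step[of "i - 1"] step2(2) Tpow_add_1[OF assms(1), of "i - 1"] by simp
  then show ?case
    using bij_is_inj[OF assms(1)] by (simp add: inj_eq)
qed

lemma linear_Tpow:
  assumes "linear T" and "linear (inv T)"
  shows "linear (Tpow T n)"
proof -
  have "linear (f ^^ k)" if "linear f" for f :: "'a \<Rightarrow> 'a" and k
  proof (induction k)
    case (Suc k)
    then show ?case
      using linear_compose[OF Suc that] by (simp add: comp_def)
  qed (simp add: linear_id[unfolded id_def])
  then show ?thesis
    using assms by (simp add: Tpow_def)
qed

lemma bounded_sums_approximate_small_vectors:
  fixes Em Ep :: "'a::banach set"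
  assumes "subspace Em" and "subspace Ep" and sums: "\<And>x. \<exists>u\<in>Em. \<exists>v\<in>Ep. x = u + v"
  obtains r N where "r > 0"
    "\<And>y \<eta>. norm y < r \<Longrightarrow> \<eta> > 0 \<Longrightarrow>
       \<exists>u\<in>Em. \<exists>v\<in>Ep. norm u \<le> N \<and> norm v \<le> N \<and> norm (y - (u + v)) < \<eta>"
proof -
  define D where "D n = {u + v | u v. u \<in> Em \<and> v \<in> Ep \<and> norm u \<le> real n \<and> norm v \<le> real n}"
    for n :: nat
  have "\<Union>(range (\<lambda>n. closure (D n))) = UNIV"
  proof (intro set_eqI iffI)
    fix x :: 'a
    obtain u v where uv: "u \<in> Em" "v \<in> Ep" "x = u + v"
      using sums by blast
    obtain n :: nat where "max (norm u) (norm v) \<le> real n"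
      using real_arch_simple by blast
    then have "x \<in> D n"
      unfolding D_def using uv by auto
    then show "x \<in> \<Union>(range (\<lambda>n. closure (D n)))"
      using closure_subset by blast
  qed simp
  then have "\<exists>n. interior (closure (D n)) \<noteq> {}"
  proof (rule contrapos_pp)
    assume "\<not> (\<exists>n. interior (closure (D n)) \<noteq> {})"
    then have "euclidean interior_of \<Union>(range (\<lambda>n. closure (D n))) = {}"
      by (intro Baire_category_alt) (auto simp: completely_metrizable_space_euclidean)
    then show "\<Union>(range (\<lambda>n. closure (D n))) \<noteq> UNIV"
      by auto
  qed
  then obtain n a where "a \<in> interior (closure (D n))"
    by blast
  then obtain r where r: "r > 0" "ball a r \<subseteq> interior (closure (D n))"
    using open_contains_ball_eq[OF open_interior] by blast
  show ?thesis
  proof (rule that[of r "real n", OF r(1)])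
    fix y :: 'a and \<eta> :: real
    assume "norm y < r" "\<eta> > 0"
    then have "a + y \<in> ball a r" "a - y \<in> ball a r"
      by (simp_all add: dist_norm)
    then have "a + y \<in> closure (D n)" "a - y \<in> closure (D n)"
      using r(2) interior_subset by blast+
    then obtain p q where p: "p \<in> D n" "norm (a + y - p) < \<eta>" and q: "q \<in> D n" "norm (a - y - q) < \<eta>"
      using \<open>\<eta> > 0\<close> closure_approachable[of _ "D n"] by (metis dist_norm norm_minus_commute)
    obtain u1 v1 u2 v2 where uv: "p = u1 + v1" "q = u2 + v2" "u1 \<in> Em" "v1 \<in> Ep" "u2 \<in> Em" "v2 \<in> Ep"
      "norm u1 \<le> n" "norm v1 \<le> n" "norm u2 \<le> n" "norm v2 \<le> n"
      using p q unfolding D_def by blast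
    \<comment> \<open>Halve the difference of the approximations of a + y and a - y.\<close>
    have "y - ((1/2) *\<^sub>R (u1 - u2) + (1/2) *\<^sub>R (v1 - v2)) = (1/2) *\<^sub>R (a + y - p) - (1/2) *\<^sub>R (a - y - q)"
      unfolding uv by (simp add: algebra_simps) (simp flip: scaleR_add_left)
    then have "norm (y - ((1/2) *\<^sub>R (u1 - u2) + (1/2) *\<^sub>R (v1 - v2))) < \<eta>"
      using p(2) q(2) norm_triangle_ineq4[of "(1/2) *\<^sub>R (a + y - p)" "(1/2) *\<^sub>R (a - y - q)"] by simp
    moreover have "norm ((1/2) *\<^sub>R (u1 - u2)) \<le> n" "norm ((1/2) *\<^sub>R (v1 - v2)) \<le> n"
      using uv norm_triangle_ineq4[of u1 u2] norm_triangle_ineq4[of v1 v2] by simp_all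
    moreover have "(1/2) *\<^sub>R (u1 - u2) \<in> Em" "(1/2) *\<^sub>R (v1 - v2) \<in> Ep"
      using uv assms(1,2) by (auto intro: subspace_mul subspace_diff)
    ultimately show "\<exists>u\<in>Em. \<exists>v\<in>Ep. norm u \<le> n \<and> norm v \<le> n \<and> norm (y - (u + v)) < \<eta>"
      by blast
  qed
qed

lemma bounded_sums_approximate_to_half:
  fixes Em Ep :: "'a::banach set"
  assumes "subspace Em" and "subspace Ep" and "\<And>x. \<exists>u\<in>Em. \<exists>v\<in>Ep. x = u + v"
  obtains M where "M \<ge> 0" "\<And>y. \<exists>u\<in>Em. \<exists>v\<in>Ep.
     norm u \<le> M * norm y \<and> norm v \<le> M * norm y \<and> norm (y - (u + v)) \<le> norm y / 2"
proof -
  obtain r N where r: "r > 0" and approx: "\<And>y \<eta>. norm y < r \<Longrightarrow> \<eta> > 0 \<Longrightarrow>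
     \<exists>u\<in>Em. \<exists>v\<in>Ep. norm u \<le> N \<and> norm v \<le> N \<and> norm (y - (u + v)) < \<eta>"
    using bounded_sums_approximate_small_vectors[OF assms] by metis
  obtain u :: 'a where "norm u \<le> N"
    using approx[of 0 1] r by auto
  then have N: "N \<ge> 0"
    using norm_ge_zero[of u] by linarith
  show ?thesis
  proof (rule that[of "2 * N / r"])
    show "0 \<le> 2 * N / r" using r N by simp
    fix y :: 'a
    show "\<exists>u\<in>Em. \<exists>v\<in>Ep. norm u \<le> 2 * N / r * norm y \<and> norm v \<le> 2 * N / r * norm y
      \<and> norm (y - (u + v)) \<le> norm y / 2"
    proof (cases "y = 0")
      case True
      then show ?thesis using assms(1,2) subspace_0 by fastforce
    next
      case False
      \<comment> \<open>Rescale y to norm r/2, approximate to within r/4, and scale back.\<close>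
      define s where "s = r / (2 * norm y)"
      have s: "s > 0" "norm (s *\<^sub>R y) = r / 2"
        using r False by (simp_all add: s_def)
      have norm_div: "norm (w /\<^sub>R s) = norm w / s" for w :: 'a
        using s(1) by (simp add: divide_inverse_commute)
      obtain u v where uv: "u \<in> Em" "v \<in> Ep" "norm u \<le> N" "norm v \<le> N"
        "norm (s *\<^sub>R y - (u + v)) < r / 4"
        using approx[of "s *\<^sub>R y" "r/4"] r s(2) by auto
      have rescale: "y - (u /\<^sub>R s + v /\<^sub>R s) = (s *\<^sub>R y - (u + v)) /\<^sub>R s"
        using s by (simp add: algebra_simps)
      have "norm (y - (u /\<^sub>R s + v /\<^sub>R s)) = norm (s *\<^sub>R y - (u + v)) / s"
        unfolding rescale by (rule norm_div)
      also have "\<dots> \<le> (r / 4) / s"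
        using uv(5) s by (intro divide_right_mono) auto
      also have "\<dots> = norm y / 2"
        using r False by (simp add: s_def)
      finally have "norm (y - (u /\<^sub>R s + v /\<^sub>R s)) \<le> norm y / 2" .
      moreover have "norm (w /\<^sub>R s) \<le> 2 * N / r * norm y" if "norm w \<le> N" for w :: 'a
      proof -
        have "norm (w /\<^sub>R s) = norm w / s"
          by (rule norm_div)
        also have "\<dots> \<le> N / s"
          using that s by (simp add: divide_right_mono)
        also have "\<dots> = 2 * N / r * norm y"
          using r False by (simp add: s_def)
        finally show ?thesis .
      qed
      moreover have "u /\<^sub>R s \<in> Em" "v /\<^sub>R s \<in> Ep"
        using uv assms(1,2) by (auto intro: subspace_mul)
      ultimately show ?thesis
        using uv(3,4) by blast
    qed
  qed
qed

lemma complementary_closed_subspaces_bounded_projections: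
  fixes Em Ep :: "'a::banach set"
  assumes "complementary_closed_subspaces Em Ep"
  obtains P Q :: "'a \<Rightarrow> 'a" and C where
    "\<And>x. P x \<in> Em" "\<And>x. Q x \<in> Ep" "\<And>x. x = P x + Q x"
    "\<And>x. norm (P x) \<le> C * norm x" "\<And>x. norm (Q x) \<le> C * norm x" "C > 0"
proof -
  have sub: "subspace Em" "subspace Ep" and closed: "closed Em" "closed Ep"
    and sums: "\<And>x. \<exists>u\<in>Em. \<exists>v\<in>Ep. x = u + v"
    using assms unfolding complementary_closed_subspaces_def by auto
  obtain M where M: "M \<ge> 0" and "\<And>y. \<exists>u\<in>Em. \<exists>v\<in>Ep.
     norm u \<le> M * norm y \<and> norm v \<le> M * norm y \<and> norm (y - (u + v)) \<le> norm y / 2"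
    using bounded_sums_approximate_to_half[OF sub sums] by blast
  then obtain U V where UV: "\<And>y. U y \<in> Em" "\<And>y. V y \<in> Ep"
    "\<And>y. norm (U y) \<le> M * norm y" "\<And>y. norm (V y) \<le> M * norm y"
    "\<And>y. norm (y - (U y + V y)) \<le> norm y / 2"
    by metis
  \<comment> \<open>Approximate x, then its error, then the error of that, and so on; the errors decay geometrically.\<close>
  define err where "err x k = ((\<lambda>y. y - (U y + V y)) ^^ k) x" for x k
  have err_Suc: "err x (Suc k) = err x k - (U (err x k) + V (err x k))" for x k
    by (simp add: err_def)
  have err_bound: "norm (err x k) \<le> norm x * (1/2) ^ k" for x k
  proof (induction k)
    case (Suc k)
    then show ?case
      using UV(5)[of "err x k"] by (simp add: err_Suc)
  qed (simp add: err_def)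
  have term_bound: "norm (W (err x k)) \<le> M * norm x * (1/2) ^ k"
    if "\<And>y. norm (W y) \<le> M * norm y" for W :: "'a \<Rightarrow> 'a" and x k
    using order_trans[OF that[of "err x k"] mult_left_mono[OF err_bound M]] by (simp add: mult.assoc)
  have series: "summable (\<lambda>k. W (err x k))" "norm (\<Sum>k. W (err x k)) \<le> 2 * M * norm x"
    if "\<And>y. norm (W y) \<le> M * norm y" for W :: "'a \<Rightarrow> 'a" and x
    using summable_geometric_bound[of "\<lambda>k. W (err x k)" "M * norm x" "1/2"] term_bound[OF that]
    by simp_all
  have in_closed: "(\<Sum>k. W (err x k)) \<in> E"
    if "subspace E" "closed E" "\<And>y. W y \<in> E" "\<And>y. norm (W y) \<le> M * norm y" for E and W :: "'a \<Rightarrow> 'a" and x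
    using closed_sequentially[OF that(2) _ summable_LIMSEQ[OF series(1)[OF that(4)]]]
      subspace_sum[OF that(1,3)] by blast
  define P where "P x = (\<Sum>k. U (err x k))" for x
  define Q where "Q x = (\<Sum>k. V (err x k))" for x
  have "x = P x + Q x" for x
  proof -
    have telescope: "(\<Sum>k<n. U (err x k)) + (\<Sum>k<n. V (err x k)) = x - err x n" for n
      by (induction n) (simp_all add: err_Suc err_def[of x 0] algebra_simps)
    have "(\<lambda>k. norm x * (1/2::real) ^ k) \<longlonglongrightarrow> 0"
      by (intro tendsto_mult_right_zero LIMSEQ_power_zero) simp
    then have "err x \<longlonglongrightarrow> 0"
      by (rule Lim_null_comparison[OF always_eventually[OF allI[OF err_bound]]])
    then have "(\<lambda>n. (\<Sum>k<n. U (err x k)) + (\<Sum>k<n. V (err x k))) \<longlonglongrightarrow> x"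
      unfolding telescope using tendsto_diff[OF tendsto_const] by fastforce
    moreover have "(\<lambda>n. (\<Sum>k<n. U (err x k)) + (\<Sum>k<n. V (err x k))) \<longlonglongrightarrow> P x + Q x"
      unfolding P_def Q_def
      by (intro tendsto_add summable_LIMSEQ series UV(3,4))
    ultimately show ?thesis
      using LIMSEQ_unique by blast
  qed
  moreover have "norm (P x) \<le> (2 * M + 1) * norm x" "norm (Q x) \<le> (2 * M + 1) * norm x" for x
    using series(2)[OF UV(3), of x] series(2)[OF UV(4), of x] unfolding P_def Q_def
    by (smt (verit, best) mult_right_mono norm_ge_zero)+
  moreover have "P x \<in> Em" "Q x \<in> Ep" for x
    unfolding P_def Q_def using in_closed sub closed UV by blast+
  ultimately show ?thesis
    using that[of P Q "2 * M + 1"] M by simp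
qed

lemma contraction_bounded_forward_solution:
  fixes L :: "'a::banach \<Rightarrow> 'a" and f :: "int \<Rightarrow> 'a"
  assumes L: "bounded_linear L" and invariant: "L ` E \<subseteq> E"
    and contracts: "\<And>x. x \<in> E \<Longrightarrow> norm (L x) \<le> t * norm x" and t: "0 \<le> t" "t < 1"
    and f: "\<And>n. f n \<in> E" "\<And>n. norm (f n) \<le> c"
  shows "\<exists>a. (\<forall>n. a (n + 1) = L (a n) + f n) \<and> (\<forall>n. norm (a n) \<le> c / (1 - t))"
proof -
  define summand where "summand n j = (L ^^ j) (f (n - 1 - int j))" for n j
  have summand_bound: "norm (summand n j) \<le> c * t ^ j" for n j
  proof -
    have "norm (summand n j) \<le> t ^ j * norm (f (n - 1 - int j))"
      unfolding summand_def using funpow_contracts[OF invariant contracts t(1) f(1)] by blast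
    also have "\<dots> \<le> t ^ j * c"
      using f(2) t(1) by (simp add: mult_left_mono)
    finally show ?thesis by (simp add: mult.commute)
  qed
  have series: "summable (summand n)" "norm (\<Sum>j. summand n j) \<le> c / (1 - t)" for n
    using summable_geometric_bound[of "summand n", OF summand_bound t] by simp_all
  define a where "a n = (\<Sum>j. summand n j)" for n
  have "a (n + 1) = L (a n) + f n" for n
  proof -
    have "summand (n + 1) (Suc j) = L (summand n j)" for j
      by (simp add: summand_def algebra_simps)
    then have shifted: "(\<Sum>j. summand (n + 1) (Suc j)) = L (a n)"
      unfolding a_def using bounded_linear.suminf[OF L series(1)] by simp
    have "a (n + 1) = (\<Sum>j. summand (n + 1) (Suc j)) + summand (n + 1) 0"
      unfolding a_def using suminf_split_head[OF series(1)] by simp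
    also have "\<dots> = L (a n) + f n"
      unfolding shifted by (simp add: summand_def)
    finally show ?thesis .
  qed
  moreover have "norm (a n) \<le> c / (1 - t)" for n
    using series(2) by (simp add: a_def)
  ultimately show ?thesis
    by blast
qed

lemma inverse_contraction_bounded_backward_solution:
  fixes T :: "'a::banach \<Rightarrow> 'a" and g :: "int \<Rightarrow> 'a"
  assumes "bij T" and S: "bounded_linear (inv T)" and "subspace E" and invariant: "inv T ` E \<subseteq> E"
    and contracts: "\<And>x. x \<in> E \<Longrightarrow> norm (inv T x) \<le> t * norm x" and t: "0 \<le> t" "t < 1"
    and g: "\<And>n. g n \<in> E" "\<And>n. norm (g n) \<le> c"
  shows "\<exists>b. (\<forall>n. b (n + 1) = T (b n) + g n) \<and> (\<forall>n. norm (b n) \<le> c / (1 - t))"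
proof -
  interpret S: bounded_linear "inv T" by (fact S)
  \<comment> \<open>Run the recursion b n = T\<inverse> (b (n + 1) - g n) forward in reversed time m = - n.\<close>
  define f where "f m = - inv T (g (- m - 1))" for m
  have "f m \<in> E" for m
    using invariant g(1) \<open>subspace E\<close> by (auto simp: f_def intro: subspace_neg)
  moreover have "norm (f m) \<le> c" for m
  proof -
    have "norm (f m) \<le> t * norm (g (- m - 1))"
      unfolding f_def using contracts[OF g(1)] by simp
    also have "\<dots> \<le> t * c"
      using g(2) t(1) by (rule mult_left_mono)
    also have "\<dots> \<le> c"
      using t order_trans[OF norm_ge_zero g(2)] by (simp add: mult_left_le_one_le)
    finally show ?thesis .
  qed
  ultimately obtain a where a: "\<And>m. a (m + 1) = inv T (a m) + f m" "\<And>m. norm (a m) \<le> c / (1 - t)"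
    using contraction_bounded_forward_solution[OF S invariant contracts t] by blast
  have "a (- n) = inv T (a (- (n + 1)) - g n)" for n
    using a(1)[of "- (n + 1)"] by (simp add: f_def S.diff)
  then have "T (a (- n)) = a (- (n + 1)) - g n" for n
    using \<open>bij T\<close> by (simp add: bij_is_surj surj_f_inv_f)
  then show ?thesis
    using a(2) by (intro exI[of _ "\<lambda>n. a (- n)"]) (simp add: algebra_simps)
qed

lemma generalized_hyperbolic_bounded_solution:
  fixes T :: "'a::banach \<Rightarrow> 'a"
  assumes "L_aut T" and "generalized_hyperbolic T"
  obtains K where "K > 0" "\<And>e \<eta>. (\<And>n::int. norm (e n) \<le> \<eta>) \<Longrightarrow>
    \<exists>w. (\<forall>n. w (n + 1) = T (w n) + e n) \<and> (\<forall>n. norm (w n) \<le> K * \<eta>)"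
proof -
  obtain Em Ep where "generalized_hyperbolic_split T Em Ep"
    using assms(2) unfolding generalized_hyperbolic_def by blast
  then have cc: "complementary_closed_subspaces Em Ep" and invariant: "T ` Ep \<subseteq> Ep" "inv T ` Em \<subseteq> Em"
    and "uniform_contraction_on Ep T" "uniform_contraction_on Em (inv T)"
    unfolding generalized_hyperbolic_split_def by auto
  then obtain tp tm where tp: "0 \<le> tp" "tp < 1" "\<And>x. x \<in> Ep \<Longrightarrow> norm (T x) \<le> tp * norm x"
    and tm: "0 \<le> tm" "tm < 1" "\<And>x. x \<in> Em \<Longrightarrow> norm (inv T x) \<le> tm * norm x"
    by (metis uniform_contraction_onE)
  obtain P Q C where PQ: "\<And>x. P x \<in> Em" "\<And>x. Q x \<in> Ep" "\<And>x. x = P x + Q x"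
    "\<And>x. norm (P x) \<le> C * norm x" "\<And>x. norm (Q x) \<le> C * norm x" and C: "C > 0"
    using complementary_closed_subspaces_bounded_projections[OF cc] by metis
  have T: "bounded_linear T" "bij T" "bounded_linear (inv T)"
    using assms(1) unfolding L_aut_def by auto
  have sub: "subspace Em"
    using cc unfolding complementary_closed_subspaces_def by blast
  show ?thesis
  proof (rule that[of "C / (1 - tp) + C / (1 - tm)"])
    show "C / (1 - tp) + C / (1 - tm) > 0"
      using C tp tm by (simp add: add_pos_pos)
    fix e :: "int \<Rightarrow> 'a" and \<eta> :: real
    assume e: "\<And>n. norm (e n) \<le> \<eta>"
    have bound: "norm (R (e n)) \<le> C * \<eta>" if "\<And>x. norm (R x) \<le> C * norm x" for R n
      using order_trans[OF that mult_left_mono[OF e]] C by simp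
    \<comment> \<open>Solve separately for the components of the forcing in Ep (forward) and in Em (backward).\<close>
    obtain a where a: "\<And>n. a (n + 1) = T (a n) + Q (e n)" "\<And>n. norm (a n) \<le> C * \<eta> / (1 - tp)"
      using contraction_bounded_forward_solution[OF T(1) invariant(1) tp(3) tp(1,2), of "\<lambda>n. Q (e n)"]
        PQ(2) bound[OF PQ(5)] by blast
    obtain b where b: "\<And>n. b (n + 1) = T (b n) + P (e n)" "\<And>n. norm (b n) \<le> C * \<eta> / (1 - tm)"
      using inverse_contraction_bounded_backward_solution[OF T(2,3) sub invariant(2) tm(3) tm(1,2),
          of "\<lambda>n. P (e n)"] PQ(1) bound[OF PQ(4)] by blast
    define w where "w n = a n + b n" for n
    have "w (n + 1) = T (w n) + e n" for n
    proof -
      have "w (n + 1) = T (a n + b n) + (P (e n) + Q (e n))"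
        using a(1) b(1) linear_add[OF bounded_linear.linear[OF T(1)]] by (simp add: w_def)
      then show ?thesis
        using PQ(3)[of "e n"] by (simp add: w_def)
    qed
    moreover have "norm (w n) \<le> (C / (1 - tp) + C / (1 - tm)) * \<eta>" for n
      unfolding w_def using norm_triangle_le[OF add_mono[OF a(2) b(2)]] by (simp add: algebra_simps)
    ultimately show "\<exists>w. (\<forall>n. w (n + 1) = T (w n) + e n)
      \<and> (\<forall>n. norm (w n) \<le> (C / (1 - tp) + C / (1 - tm)) * \<eta>)"
      by blast
  qed
qed

lemma generalized_hyperbolic_shadowing:
  fixes T :: "'a::banach \<Rightarrow> 'a"
  assumes "L_aut T" and "generalized_hyperbolic T"
  shows "shadowing_property T"
  unfolding shadowing_property_def
proof (intro allI impI)
  fix \<epsilon> :: real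
  assume "\<epsilon> > 0"
  obtain K where K: "K > 0" and solve: "\<And>e \<eta>. (\<And>n::int. norm (e n) \<le> \<eta>) \<Longrightarrow>
    \<exists>w. (\<forall>n. w (n + 1) = T (w n) + e n) \<and> (\<forall>n. norm (w n) \<le> K * \<eta>)"
    using generalized_hyperbolic_bounded_solution[OF assms] by blast
  have T: "linear T" "bij T"
    using assms(1) unfolding L_aut_def by (auto intro: bounded_linear.linear)
  show "\<exists>\<delta>>0. \<forall>x. pseudo_orbit T \<delta> x \<longrightarrow> (\<exists>y. shadows T \<epsilon> y x)"
  proof (intro exI[of _ "\<epsilon> / (2 * K)"] conjI allI impI)
    show "\<epsilon> / (2 * K) > 0"
      using \<open>\<epsilon> > 0\<close> K by simp
    fix x
    assume "pseudo_orbit T (\<epsilon> / (2 * K)) x"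
    then have "norm (x (n + 1) - T (x n)) \<le> \<epsilon> / (2 * K)" for n
      unfolding pseudo_orbit_def by (simp add: less_imp_le)
    then obtain w where w: "\<And>n. w (n + 1) = T (w n) + (x (n + 1) - T (x n))"
      "\<And>n. norm (w n) \<le> K * (\<epsilon> / (2 * K))"
      using solve[of "\<lambda>n. x (n + 1) - T (x n)"] by blast
    define d where "d n = x n - w n" for n
    have "d (n + 1) = T (d n)" for n
      using w(1) linear_diff[OF T(1)] by (simp add: d_def)
    then have orbit: "d n = Tpow T n (d 0)" for n
      by (rule recurrence_eq_Tpow[OF T(2)])
    have "x n - Tpow T n (d 0) = w n" for n
      unfolding orbit[of n, symmetric] by (simp add: d_def)
    moreover have "norm (w n) < \<epsilon>" for n
      using w(2)[of n] K \<open>\<epsilon> > 0\<close> by simp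
    ultimately have "shadows T \<epsilon> (d 0) x"
      unfolding shadows_def by simp
    then show "\<exists>y. shadows T \<epsilon> y x" ..
  qed
qed

lemma shifted_hyperbolic_bounded_orbit:
  fixes T :: "'a::banach \<Rightarrow> 'a"
  assumes "L_aut T" and "shifted_hyperbolic T"
  obtains z B where "z \<noteq> 0" "\<And>n. norm (Tpow T n z) \<le> B"
proof -
  obtain Em Ep where "generalized_hyperbolic_split T Em Ep" and shift: "Em \<inter> inv T ` Ep \<noteq> {0}"
    using assms(2) unfolding shifted_hyperbolic_def by blast
  then have cc: "complementary_closed_subspaces Em Ep" and invariant: "T ` Ep \<subseteq> Ep" "inv T ` Em \<subseteq> Em"
    and "uniform_contraction_on Ep T" "uniform_contraction_on Em (inv T)"
    unfolding generalized_hyperbolic_split_def by auto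
  then obtain tp tm where tp: "0 \<le> tp" "tp < 1" "\<And>x. x \<in> Ep \<Longrightarrow> norm (T x) \<le> tp * norm x"
    and tm: "0 \<le> tm" "tm < 1" "\<And>x. x \<in> Em \<Longrightarrow> norm (inv T x) \<le> tm * norm x"
    by (metis uniform_contraction_onE)
  have T: "linear (inv T)" "bij T"
    using assms(1) unfolding L_aut_def by (auto intro: bounded_linear.linear)
  have "0 \<in> Em" "0 \<in> Ep"
    using cc unfolding complementary_closed_subspaces_def by (auto intro: subspace_0)
  then have "0 \<in> Em \<inter> inv T ` Ep"
    using linear_0[OF T(1)] by force
  then obtain p where p: "p \<in> Ep" "inv T p \<in> Em" "inv T p \<noteq> 0"
    using shift by blast
  define z where "z = inv T p"
  have z: "z \<in> Em" "T z \<in> Ep" "z \<noteq> 0"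
    using p T(2) by (simp_all add: z_def bij_is_surj surj_f_inv_f)
  \<comment> \<open>The backward orbit of z \<in> Em and the forward orbit of T z \<in> Ep both contract.\<close>
  have "norm (Tpow T n z) \<le> norm z + norm (T z)" for n
  proof (cases n rule: int_cases)
    case (nonneg k)
    show ?thesis
    proof (cases k)
      case (Suc j)
      have "norm ((T ^^ j) (T z)) \<le> tp ^ j * norm (T z)"
        using funpow_contracts[OF invariant(1) tp(3) tp(1) z(2)] by blast
      also have "\<dots> \<le> norm (T z)"
        using tp by (intro mult_left_le_one_le power_le_one) auto
      moreover have "Tpow T n z = (T ^^ j) (T z)"
        unfolding nonneg Suc Tpow_nat funpow_Suc_right by simp
      ultimately show ?thesis
        by (smt (verit) norm_ge_zero)
    qed (simp add: nonneg Tpow_def)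
  next
    case (neg k)
    have "norm ((inv T ^^ Suc k) z) \<le> tm ^ Suc k * norm z"
      using funpow_contracts[OF invariant(2) tm(3) tm(1) z(1)] by blast
    also have "\<dots> \<le> norm z"
      using tm by (intro mult_left_le_one_le power_le_one) auto
    moreover have "Tpow T n z = (inv T ^^ Suc k) z"
      unfolding neg Tpow_minus_nat ..
    ultimately show ?thesis
      by (smt (verit) norm_ge_zero)
  qed
  with z(3) show ?thesis
    using that by blast
qed

lemma bounded_orbit_not_unique_shadowing:
  fixes T :: "'a::real_normed_vector \<Rightarrow> 'a"
  assumes "linear T" and "linear (inv T)" and "z \<noteq> 0" and bounded: "\<And>n. norm (Tpow T n z) \<le> B"
  shows "\<not> unique_shadowing_property T"
proof
  assume "unique_shadowing_property T"
  then obtain \<epsilon> \<delta> where "\<epsilon> > 0" "\<delta> > 0" and unique: "\<And>x. pseudo_orbit T \<delta> x \<Longrightarrow> \<exists>!y. shadows T \<epsilon> y x"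
    unfolding unique_shadowing_property_def by (meson order_refl)
  have linear: "\<And>n. linear (Tpow T n)"
    using linear_Tpow[OF assms(1,2)] .
  have "pseudo_orbit T \<delta> (\<lambda>_. 0)"
    using \<open>\<delta> > 0\<close> linear_0[OF assms(1)] by (simp add: pseudo_orbit_def)
  moreover have "shadows T \<epsilon> 0 (\<lambda>_. 0)"
    using \<open>\<epsilon> > 0\<close> linear_0[OF linear] by (simp add: shadows_def)
  moreover have "shadows T \<epsilon> (s *\<^sub>R z) (\<lambda>_. 0)" if "\<bar>s\<bar> * B < \<epsilon>" for s
  proof -
    have "norm (Tpow T n (s *\<^sub>R z)) \<le> \<bar>s\<bar> * B" for n
      using bounded[of n] linear_scale[OF linear] by (simp add: mult_left_mono)
    then show ?thesis
      using that unfolding shadows_def by (auto intro: order_le_less_trans)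
  qed
  moreover obtain s where "s \<noteq> 0" "\<bar>s\<bar> * B < \<epsilon>"
  proof (cases "B > 0")
    case True
    then show ?thesis
      using that[of "\<epsilon> / (2 * B)"] \<open>\<epsilon> > 0\<close> by simp
  qed (use that[of 1] \<open>\<epsilon> > 0\<close> in simp)
  ultimately show False
    using unique assms(3) by (metis scaleR_eq_0_iff)
qed

theorem mainTheorem16:
  fixes T :: "'a::banach \<Rightarrow> 'a"
  assumes "L_aut T" and "shifted_hyperbolic T"
  shows "shadowing_property T \<and> \<not> unique_shadowing_property T"
proof
  have "generalized_hyperbolic T"
    using assms(2) unfolding shifted_hyperbolic_def generalized_hyperbolic_def by blast
  then show "shadowing_property T"
    by (rule generalized_hyperbolic_shadowing[OF assms(1)])
  have "linear T" "linear (inv T)"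
    using assms(1) unfolding L_aut_def by (auto intro: bounded_linear.linear)
  moreover obtain z B where "z \<noteq> 0" "\<And>n. norm (Tpow T n z) \<le> B"
    using shifted_hyperbolic_bounded_orbit[OF assms] by metis
  ultimately show "\<not> unique_shadowing_property T"
    by (rule bounded_orbit_not_unique_shadowing)
qed

end
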